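(* Let $q$ be a prime power with $q>2$, $m,n\ge1$, and let $\mathscr{C}\subseteq\mathrm{GF}(q^m)^n$ be a scalable code. Let $f:\mathrm{GF}(q^m)^n\times\mathrm{GF}(q^m)^n\to\mathrm{GF}(q^m)$ be a biadditive form and $\tilde f$ the biadditive form on $\mathrm{GF}(q)^{mn}$ induced by $f$. Suppose $\mathrm{Im}_{\mathscr{B}}(\mathscr{C})$ is self-orthogonal w.r.t. $\tilde f$ for three bases $\mathscr{B}_1,\mathscr{B}_2,\mathscr{B}_3$ of $\mathrm{GF}(q^m)$ over $\mathrm{GF}(q)$ whose dual bases are $\mathscr{B}_1'=\{\beta_1,\ldots,\beta_m\}$, $\mathscr{B}_2'=\{\beta_1+\alpha\beta_2,\beta_2,\ldots,\beta_m\}$ and $\mathscr{B}_3'=\{\beta_1+\gamma\beta_2,\beta_2,\ldots,\beta_m\}$, where $\alpha,\gamma$ are distinct nonzero elements of $\mathrm{GF}(q)$. Then $\mathrm{Tr}(\mathscr{C})$ is self-orthogonal w.r.t. $f$ (restricted to $\mathrm{GF}(q)^n\times\mathrm{GF}(q)^n$), and $\mathrm{Im}_{\mathscr{B}}(\mathscr{C})$ is self-orthogonal w.r.t. $\tilde f$ for every basis $\mathscr{B}$ of $\mathrm{GF}(q^m)$ over $\mathrm{GF}(q)$.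
   Context: $\mathrm{Tr}:\mathrm{GF}(q^m)\to\mathrm{GF}(q)$, $\mathrm{Tr}(a)=\sum_{i=0}^{m-1}a^{q^i}$. The dual basis of a basis $\{\gamma_1,\ldots,\gamma_m\}$ of $\mathrm{GF}(q^m)$ over $\mathrm{GF}(q)$ is the unique basis $\{\beta_1,\ldots,\beta_m\}$ with $\mathrm{Tr}(\gamma_i\beta_j)=\delta_{ij}$. A code $\mathscr{C}\subseteq\mathrm{GF}(q^m)^n$ is scalable if $x\in\mathscr{C}\Rightarrow\alpha x\in\mathscr{C}$ for all $\alpha\in\mathrm{GF}(q^m)$. A biadditive form is additive in each argument. For a basis $\mathscr{B}$ with dual basis $\{\beta_1,\ldots,\beta_m\}$, $\mathrm{Im}_{\mathscr{B}}(\mathscr{C})=\{(\mathrm{Tr}(\beta_1x_1),\ldots,\mathrm{Tr}(\beta_1x_n),\ldots,\mathrm{Tr}(\beta_mx_1),\ldots,\mathrm{Tr}(\beta_mx_n)):x\in\mathscr{C}\}\subseteq\mathrm{GF}(q)^{mn}$, and $\mathrm{Tr}(\mathscr{C})=\{(\mathrm{Tr}(x_1),\ldots,\mathrm{Tr}(x_n)):x\in\mathscr{C}\}$. The induced form is $\tilde f(x,y)=\sum_{i=0}^{m-1}f((x_{in+1},\ldots,x_{in+n}),(y_{in+1},\ldots,y_{in+n}))$ for $x,y\in\mathrm{GF}(q)^{mn}$. A code $D$ is self-orthogonal w.r.t. a form $g$ if $g(x,y)=0$ for all $x,y\in D$. *)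

theory Defs
  imports Main "HOL-Computational_Algebra.Primes"
begin

text \<open>The ambient field GF(q^m) is a finite field type 'a with CARD('a) = q^m.
  Vectors in GF(q^m)^n are lists of length n. GF(q) is the subfield {x. x^q = x}.\<close>

definition GFq :: "nat \<Rightarrow> 'a::field set" where
  "GFq q = {x. x ^ q = x}"

definition prime_power :: "nat \<Rightarrow> bool" where
  "prime_power q \<longleftrightarrow> (\<exists>p k. prime p \<and> k \<ge> 1 \<and> q = p ^ k)"

definition Tr :: "nat \<Rightarrow> nat \<Rightarrow> 'a::field \<Rightarrow> 'a" where
  "Tr q m a = (\<Sum>i<m. a ^ (q ^ i))"

definition vadd :: "'a::field list \<Rightarrow> 'a list \<Rightarrow> 'a list" where
  "vadd x y = map2 (+) x y"

definition vecs :: "'a set \<Rightarrow> nat \<Rightarrow> 'a list set" where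
  "vecs K n = {x. length x = n \<and> set x \<subseteq> K}"

definition biadditive :: "nat \<Rightarrow> ('a::field list \<Rightarrow> 'a list \<Rightarrow> 'a) \<Rightarrow> bool" where
  "biadditive n f \<longleftrightarrow>
     (\<forall>x\<in>vecs UNIV n. \<forall>y\<in>vecs UNIV n. \<forall>z\<in>vecs UNIV n.
        f (vadd x y) z = f x z + f y z \<and> f z (vadd x y) = f z x + f z y)"

definition scalable :: "'a::field list set \<Rightarrow> bool" where
  "scalable C \<longleftrightarrow> (\<forall>x\<in>C. \<forall>a. map ((*) a) x \<in> C)"

definition is_basis :: "nat \<Rightarrow> nat \<Rightarrow> 'a::field list \<Rightarrow> bool" where
  "is_basis q m B \<longleftrightarrow> length B = m \<and>
     (\<forall>c. (\<forall>i<m. c i \<in> GFq q) \<and> (\<Sum>i<m. c i * B ! i) = 0 \<longrightarrow> (\<forall>i<m. c i = 0)) \<and>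
     (\<forall>x. \<exists>c. (\<forall>i<m. c i \<in> GFq q) \<and> x = (\<Sum>i<m. c i * B ! i))"

definition is_dual_basis :: "nat \<Rightarrow> nat \<Rightarrow> 'a::field list \<Rightarrow> 'a list \<Rightarrow> bool" where
  "is_dual_basis q m B \<beta> \<longleftrightarrow> is_basis q m \<beta> \<and>
     (\<forall>i<m. \<forall>j<m. Tr q m (B ! i * \<beta> ! j) = (if i = j then 1 else 0))"

definition dual_basis :: "nat \<Rightarrow> nat \<Rightarrow> 'a::field list \<Rightarrow> 'a list" where
  "dual_basis q m B = (THE \<beta>. is_dual_basis q m B \<beta>)"

definition Im :: "nat \<Rightarrow> nat \<Rightarrow> 'a::field list \<Rightarrow> 'a list set \<Rightarrow> 'a list set" where
  "Im q m B C = (\<lambda>x. concat (map (\<lambda>b. map (\<lambda>xi. Tr q m (b * xi)) x) (dual_basis q m B))) ` C"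

definition TrC :: "nat \<Rightarrow> nat \<Rightarrow> 'a::field list set \<Rightarrow> 'a list set" where
  "TrC q m C = (\<lambda>x. map (Tr q m) x) ` C"

definition induced_form :: "nat \<Rightarrow> nat \<Rightarrow> ('a list \<Rightarrow> 'a list \<Rightarrow> 'b::comm_monoid_add)
      \<Rightarrow> 'a list \<Rightarrow> 'a list \<Rightarrow> 'b" where
  "induced_form m n f x y = (\<Sum>i<m. f (take n (drop (i * n) x)) (take n (drop (i * n) y)))"

definition self_orthogonal :: "'a list set \<Rightarrow> ('a list \<Rightarrow> 'a list \<Rightarrow> 'b::zero) \<Rightarrow> bool" where
  "self_orthogonal D g \<longleftrightarrow> (\<forall>x\<in>D. \<forall>y\<in>D. g x y = 0)"

end

theory Submission
  imports Defs "HOL-Computational_Algebra.Polynomial" "HOL-Library.Cardinality" "HOL-Library.FuncSet"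
    "HOL-Number_Theory.Cong"
begin

text \<open>
  For codewords \<open>x, y\<close> of \<open>C\<close>, the map \<open>G(u, v) = f(Tr(u x), Tr(v y))\<close> is a biadditive
  form on \<open>GF(q^m)\<close>. If \<open>L\<close> is the dual basis of a basis \<open>B\<close>, scalability of \<open>C\<close> turns
  self-orthogonality of \<open>Im_B(C)\<close> into the identities \<open>\<Sum>i. G(L_i a, L_i b) = 0\<close> for all
  \<open>a, b\<close>. The dual bases \<open>B_1'\<close> and \<open>B_2'\<close> differ only in their first vector, so comparing their
  identities shows that \<open>G\<close> is invariant under scaling both arguments by \<open>1 + \<alpha> s\<close>, where
  \<open>s = \<beta>_2 / \<beta>_1\<close> is not in \<open>GF(q)\<close>; likewise for \<open>1 + \<gamma> s\<close>. Every biadditive form is a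
  linearized form \<open>\<Sum>i j. g_ij u^(p^i) v^(p^j)\<close>, and invariance under scaling by \<open>c\<close> forces
  \<open>c^(p^i + p^j) = 1\<close> whenever \<open>g_ij \<noteq> 0\<close>. For both \<open>c = 1 + \<alpha> s\<close> and \<open>c = 1 + \<gamma> s\<close> this would
  put \<open>s^(p^i)\<close> into \<open>GF(q)\<close>, so \<open>G = 0\<close>. This gives both conclusions: \<open>Tr(C)\<close> pairs through
  \<open>G(1, 1)\<close> and every \<open>Im_B(C)\<close> through \<open>\<Sum>i. G(L_i, L_i)\<close>.
\<close>

hide_const (open) Complex.Im

subsection \<open>Finite fields and Frobenius powers\<close>

lemma prime_CHAR_finite_field: "prime CHAR('a::{field,finite})"
  by (rule prime_CHAR_semidom) (simp add: finite_imp_CHAR_pos)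

lemma CARD_ge_2_finite_field: "CARD('a::{field,finite}) \<ge> 2"
proof -
  have "card {0, 1::'a} \<le> CARD('a)"
    by (rule card_mono) auto
  then show ?thesis
    by simp
qed

lemma power_CARD_minus_one_eq_one:
  fixes x :: "'a::{field,finite}"
  assumes "x \<noteq> 0"
  shows "x ^ (CARD('a) - 1) = 1"
proof -
  let ?U = "UNIV - {0::'a}"
  have "card ?U = CARD('a) - 1"
    by (simp add: card_Diff_singleton)
  moreover have "(\<Prod>y\<in>?U. x * y) = (\<Prod>y\<in>?U. y)"
    by (rule prod.reindex_bij_witness[of _ "\<lambda>y. y / x" "\<lambda>y. x * y"]) (use assms in auto)
  moreover have "(\<Prod>y\<in>?U. y) \<noteq> 0"
    by simp
  ultimately show ?thesis
    by (simp add: prod.distrib)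
qed

lemma power_CARD_eq_self: "(x::'a::{field,finite}) ^ CARD('a) = x"
proof (cases "x = 0")
  case False
  have "x ^ CARD('a) = x * x ^ (CARD('a) - 1)"
    using CARD_ge_2_finite_field[where 'a='a] by (simp flip: power_Suc)
  then show ?thesis
    using power_CARD_minus_one_eq_one[OF False] by simp
qed (use CARD_ge_2_finite_field[where 'a='a] in simp)

lemma of_nat_CARD_eq_zero: "of_nat CARD('a::{field,finite}) = (0::'a)"
proof -
  have "(\<Sum>y::'a\<in>UNIV. 1 + y) = (\<Sum>y\<in>UNIV. y)"
    by (rule sum.reindex_bij_witness[of _ "\<lambda>y. y - 1" "\<lambda>y. 1 + y"]) auto
  then show ?thesis
    by (simp add: sum.distrib)
qed

lemma CHAR_power_of_prime_power:
  assumes "prime_power q" and "CARD('a::{field,finite}) = q ^ m" and "m \<ge> 1"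
  obtains k where "k \<ge> 1" and "q = CHAR('a) ^ k"
proof -
  obtain p k where p: "prime p" "k \<ge> 1" "q = p ^ k"
    using assms(1) unfolding prime_power_def by blast
  have "CHAR('a) dvd CARD('a)"
    using of_nat_CARD_eq_zero[where 'a='a] by (simp only: of_nat_eq_0_iff_char_dvd)
  then have "CHAR('a) dvd p ^ (k * m)"
    using assms(2) p(3) by (simp add: power_mult)
  then have "CHAR('a) = p"
    using prime_CHAR_finite_field[where 'a='a] p(1) prime_dvd_power primes_dvd_imp_eq by blast
  with p that show thesis
    by blast
qed

context
  fixes r l :: nat
  assumes r: "r = CHAR('a::{field,finite}) ^ l"
begin

lemma frobenius_add: "(x + y :: 'a) ^ r = x ^ r + y ^ r"
  using freshmans_dream'[OF prime_CHAR_finite_field r] .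

lemma frobenius_sum: "(sum g A :: 'a) ^ r = (\<Sum>i\<in>A. g i ^ r)"
  using freshmans_dream_sum'[OF prime_CHAR_finite_field r] .

lemma additive_frobenius: "additive (\<lambda>x::'a. x ^ r)"
  by unfold_locales (rule frobenius_add)

lemma frobenius_minus: "(- x :: 'a) ^ r = - (x ^ r)"
  using additive.minus[OF additive_frobenius] .

lemma frobenius_diff: "(x - y :: 'a) ^ r = x ^ r - y ^ r"
  using additive.diff[OF additive_frobenius] .

lemma frobenius_inject: "(x :: 'a) ^ r = y ^ r \<longleftrightarrow> x = y"
  using frobenius_diff[of x y] by (metis eq_iff_diff_eq_0 power_eq_0_iff)

end

subsection \<open>The subfield GF(q) and the trace\<close>

lemma GFq_zero [simp]: "q > 0 \<Longrightarrow> (0::'a::field) \<in> GFq q"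
  unfolding GFq_def by simp

lemma GFq_one [simp]: "(1::'a::field) \<in> GFq q"
  unfolding GFq_def by simp

lemma GFq_mult: "x \<in> GFq q \<Longrightarrow> y \<in> GFq q \<Longrightarrow> (x * y :: 'a::field) \<in> GFq q"
  unfolding GFq_def by (simp add: power_mult_distrib)

lemma GFq_divide: "x \<in> GFq q \<Longrightarrow> y \<in> GFq q \<Longrightarrow> (x / y :: 'a::field) \<in> GFq q"
  unfolding GFq_def by (simp add: power_divide)

lemma GFq_power:
  assumes "x \<in> GFq q"
  shows "(x ^ r :: 'a::field) \<in> GFq q"
proof -
  have "(x ^ r) ^ q = (x ^ q) ^ r"
    by (simp flip: power_mult add: mult.commute)
  with assms show ?thesis
    unfolding GFq_def by simp
qed

lemma GFq_power_power_eq: "x \<in> GFq q \<Longrightarrow> (x::'a::field) ^ (q ^ i) = x"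
  unfolding GFq_def by (induction i) (simp_all add: power_mult)

context
  fixes q k :: nat
  assumes q: "q = CHAR('a::{field,finite}) ^ k"
begin

lemma GFq_diff: "x \<in> GFq q \<Longrightarrow> y \<in> GFq q \<Longrightarrow> (x - y :: 'a) \<in> GFq q"
  unfolding GFq_def by (simp add: frobenius_diff[OF q])

lemma GFq_uminus: "x \<in> GFq q \<Longrightarrow> (- x :: 'a) \<in> GFq q"
  unfolding GFq_def by (simp add: frobenius_minus[OF q])

lemma GFq_frobenius_iff: "(x::'a) ^ (CHAR('a) ^ i) \<in> GFq q \<longleftrightarrow> x \<in> GFq q"
proof -
  have "(x ^ (CHAR('a) ^ i)) ^ q = (x ^ q) ^ (CHAR('a) ^ i)"
    by (simp flip: power_mult add: mult.commute)
  then show ?thesis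
    unfolding GFq_def by (simp add: frobenius_inject[OF refl])
qed

lemma additive_Tr: "additive (Tr q M :: 'a \<Rightarrow> 'a)"
proof
  fix x y :: 'a
  have "q ^ i = CHAR('a) ^ (k * i)" for i
    by (simp add: q power_mult)
  then show "Tr q M (x + y) = Tr q M x + Tr q M y"
    unfolding Tr_def by (simp add: sum.distrib frobenius_add[OF refl])
qed

lemma Tr_sum: "Tr q M (sum g A :: 'a) = (\<Sum>i\<in>A. Tr q M (g i))"
  by (rule additive.sum[OF additive_Tr])

lemma Tr_diff: "Tr q M (x - y :: 'a) = Tr q M x - Tr q M y"
  by (rule additive.diff[OF additive_Tr])

lemma Tr_zero: "Tr q M (0 :: 'a) = 0"
  by (rule additive.zero[OF additive_Tr])

lemma Tr_mult_GFq: "c \<in> GFq q \<Longrightarrow> Tr q M (c * x :: 'a) = c * Tr q M x"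
  unfolding Tr_def by (simp add: power_mult_distrib GFq_power_power_eq sum_distrib_left)

lemma Tr_in_GFq:
  assumes "q ^ M = CARD('a)"
  shows "Tr q M (x::'a) \<in> GFq q"
proof -
  have "Tr q M x ^ q = (\<Sum>i<M. x ^ q ^ Suc i)"
    unfolding Tr_def by (simp add: frobenius_sum[OF q] flip: power_mult) (simp add: mult.commute)
  also have "\<dots> = (\<Sum>i<Suc M. x ^ q ^ i) - x"
    unfolding sum.lessThan_Suc_shift by simp
  also have "\<dots> = Tr q M x"
    unfolding Tr_def by (simp add: assms power_CARD_eq_self)
  finally show ?thesis
    unfolding GFq_def by simp
qed

end

text \<open>Eliminating \<open>Y = s^(p^j)\<close> from the two equations exhibits \<open>X = s^(p^i)\<close> as a quotient of
  elements of \<open>GF(q)\<close>.\<close>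

lemma frobenius_sum_power_not_both_one:
  fixes \<alpha> \<gamma> s :: "'a::{field,finite}"
  assumes q: "q = CHAR('a) ^ k"
    and "\<alpha> \<in> GFq q" "\<gamma> \<in> GFq q" "\<alpha> \<noteq> 0" "\<gamma> \<noteq> 0" "\<alpha> \<noteq> \<gamma>" and s: "s \<notin> GFq q"
  shows "\<not> ((1 + \<alpha> * s) ^ (CHAR('a) ^ i + CHAR('a) ^ j) = 1 \<and>
            (1 + \<gamma> * s) ^ (CHAR('a) ^ i + CHAR('a) ^ j) = 1)"
proof
  define X Y where "X = s ^ CHAR('a) ^ i" and "Y = s ^ CHAR('a) ^ j"
  define A A' where "A = \<alpha> ^ CHAR('a) ^ i" and "A' = \<alpha> ^ CHAR('a) ^ j"
  define C C' where "C = \<gamma> ^ CHAR('a) ^ i" and "C' = \<gamma> ^ CHAR('a) ^ j"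
  have expand: "(1 + c * s) ^ (CHAR('a) ^ i + CHAR('a) ^ j)
      = (1 + c ^ CHAR('a) ^ i * X) * (1 + c ^ CHAR('a) ^ j * Y)" for c
    unfolding X_def Y_def by (simp add: power_add frobenius_add[OF refl] power_mult_distrib)
  assume "(1 + \<alpha> * s) ^ (CHAR('a) ^ i + CHAR('a) ^ j) = 1 \<and>
          (1 + \<gamma> * s) ^ (CHAR('a) ^ i + CHAR('a) ^ j) = 1"
  then have "(1 + A * X) * (1 + A' * Y) = 1" and "(1 + C * X) * (1 + C' * Y) = 1"
    unfolding expand A_def A'_def C_def C'_def by simp_all
  then have eq_A: "A' * Y * (1 + A * X) = - (A * X)" and eq_C: "C' * Y * (1 + C * X) = - (C * X)"
    by (simp_all add: algebra_simps eq_neg_iff_add_eq_0)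
  have "X \<notin> GFq q"
    unfolding X_def using s GFq_frobenius_iff[OF q] by blast
  moreover have "q > 0"
    using q prime_gt_0_nat[OF prime_CHAR_finite_field[where 'a='a]] by simp
  ultimately have "X \<noteq> 0"
    by (metis GFq_zero)
  have "A' \<noteq> C'"
    unfolding A'_def C'_def using \<open>\<alpha> \<noteq> \<gamma>\<close> frobenius_inject[OF refl] by blast
  have nonzero: "A \<noteq> 0" "C \<noteq> 0"
    unfolding A_def C_def using assms by simp_all
  have "- (A * X) * (C' * (1 + C * X)) = - (C * X) * (A' * (1 + A * X))"
    unfolding eq_A[symmetric] eq_C[symmetric] by (simp add: mult_ac)
  then have "A * C' * (1 + C * X) = C * A' * (1 + A * X)"
    using \<open>X \<noteq> 0\<close> by (simp add: mult_ac)
  then have "A * C' - C * A' = X * (A * C * (A' - C'))"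
    by (simp add: algebra_simps)
  then have "X = (A * C' - C * A') / (A * C * (A' - C'))"
    using nonzero \<open>A' \<noteq> C'\<close> by (simp add: field_simps)
  moreover have "\<dots> \<in> GFq q"
    unfolding A_def A'_def C_def C'_def using assms
    by (intro GFq_divide GFq_diff[OF q] GFq_mult GFq_power)
  ultimately show False
    using \<open>X \<notin> GFq q\<close> by simp
qed

subsection \<open>Power sums\<close>

lemma exists_power_ne_one:
  assumes "0 < e" and "\<not> (CARD('a) - 1) dvd e"
  obtains d :: "'a::{field,finite}" where "d \<noteq> 0" and "d ^ e \<noteq> 1"
proof -
  define t where "t = e mod (CARD('a) - 1)"
  have t: "0 < t" "t < CARD('a) - 1"
    using assms CARD_ge_2_finite_field[where 'a='a] unfolding t_def
    by (auto simp: mod_eq_0_iff_dvd[symmetric])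
  define P :: "'a poly" where "P = monom 1 t - 1"
  have "coeff P t = 1"
    unfolding P_def using t(1) by simp
  then have "card {x. poly P x = 0} \<le> degree P"
    by (intro card_poly_roots_bound) auto
  also have "degree P \<le> t"
    unfolding P_def by (simp add: degree_diff_le degree_monom_le)
  finally have "card {x. poly P x = 0} < card (UNIV - {0::'a})"
    using t(2) by (simp add: card_Diff_singleton)
  then have "\<not> UNIV - {0::'a} \<subseteq> {x. poly P x = 0}"
    using card_mono[of "{x. poly P x = 0}" "UNIV - {0::'a}"] by auto
  then obtain d where d: "d \<noteq> 0" "poly P d \<noteq> 0"
    by auto
  have "e = (CARD('a) - 1) * (e div (CARD('a) - 1)) + t"
    unfolding t_def by simp
  then have "d ^ e = (d ^ (CARD('a) - 1)) ^ (e div (CARD('a) - 1)) * d ^ t"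
    by (metis power_add power_mult)
  then have "d ^ e = d ^ t"
    using power_CARD_minus_one_eq_one[OF d(1)] by simp
  with d that show thesis
    unfolding P_def by (simp add: poly_monom)
qed

lemma sum_power_eq_zero:
  assumes "0 < e" and "\<not> (CARD('a::{field,finite}) - 1) dvd e"
  shows "(\<Sum>c::'a\<in>UNIV. c ^ e) = 0"
proof -
  obtain d :: 'a where d: "d \<noteq> 0" "d ^ e \<noteq> 1"
    using exists_power_ne_one[OF assms] .
  have "(\<Sum>c\<in>UNIV. (d * c) ^ e) = (\<Sum>c::'a\<in>UNIV. c ^ e)"
    by (rule sum.reindex_bij_witness[of _ "\<lambda>y. y / d" "\<lambda>y. d * y"]) (use d in auto)
  then have "d ^ e * (\<Sum>c::'a\<in>UNIV. c ^ e) = 1 * (\<Sum>c\<in>UNIV. c ^ e)"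
    by (simp add: power_mult_distrib sum_distrib_left)
  with d(2) show ?thesis
    by (metis mult_cancel_right)
qed

lemma sum_power_CARD_minus_one: "(\<Sum>c::'a::{field,finite}\<in>UNIV. c ^ (CARD('a) - 1)) = - 1"
proof -
  have "(\<Sum>c::'a\<in>UNIV. c ^ (CARD('a) - 1)) = (\<Sum>c\<in>UNIV - {0::'a}. c ^ (CARD('a) - 1))"
    using CARD_ge_2_finite_field[where 'a='a] by (intro sum.mono_neutral_right) auto
  also have "\<dots> = (\<Sum>c\<in>UNIV - {0::'a}. 1)"
    by (rule sum.cong[OF refl], rule power_CARD_minus_one_eq_one) simp
  also have "\<dots> = of_nat (CARD('a) - 1)"
    by (simp add: card_Diff_singleton)
  finally show ?thesis
    using CARD_ge_2_finite_field[where 'a='a] by (simp add: of_nat_diff of_nat_CARD_eq_zero)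
qed

lemma sum_power_plus_CARD_minus_two:
  assumes "0 < a" and "a < CARD('a::{field,finite})"
  shows "(\<Sum>c::'a\<in>UNIV. c ^ (a + (CARD('a) - 2))) = (if a = 1 then - 1 else 0)"
proof (cases "a = 1")
  case True
  then have "a + (CARD('a) - 2) = CARD('a) - 1"
    using assms(2) by simp
  then show ?thesis
    using True by (simp only: sum_power_CARD_minus_one simp_thms if_True)
next
  case False
  have e: "a + (CARD('a) - 2) = (CARD('a) - 1) + (a - 1)"
    using assms by simp
  have "0 < a - 1" and "a - 1 < CARD('a) - 1"
    using assms False by auto
  then have "\<not> (CARD('a) - 1) dvd (a - 1)"
    by (rule nat_dvd_not_less)
  then have "\<not> (CARD('a) - 1) dvd (a + (CARD('a) - 2))"
    unfolding e using dvd_add_right_iff[OF dvd_refl, of "CARD('a) - 1" "a - 1"] by blast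
  with False show ?thesis
    using assms by (simp add: sum_power_eq_zero)
qed

text \<open>Every \<open>u\<close> is recovered from the traces \<open>Tr(u c)\<close>: summing over \<open>c\<close> kills every
  Frobenius term of the trace except the first.\<close>

lemma sum_Tr_mult_power_CARD_minus_two:
  fixes u :: "'a::{field,finite}"
  assumes q: "q = CHAR('a) ^ k" and "k \<ge> 1" and qM: "q ^ M = CARD('a)"
  shows "(\<Sum>c\<in>UNIV. Tr q M (u * c) * c ^ (CARD('a) - 2)) = - u"
proof -
  have "q > 1"
    unfolding q using \<open>k \<ge> 1\<close> prime_gt_1_nat[OF prime_CHAR_finite_field[where 'a='a]]
    by (intro one_less_power) auto
  have "M > 0"
    using qM CARD_ge_2_finite_field[where 'a='a] by (cases M) auto
  have "(\<Sum>c\<in>UNIV. Tr q M (u * c) * c ^ (CARD('a) - 2))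
      = (\<Sum>i<M. u ^ q ^ i * (\<Sum>c\<in>UNIV. c ^ (q ^ i + (CARD('a) - 2))))"
    unfolding Tr_def
    by (simp add: sum_distrib_left sum_distrib_right power_mult_distrib power_add mult_ac
        sum.swap[where A = UNIV])
  also have "\<dots> = (\<Sum>i<M. if i = 0 then - u else 0)"
  proof (rule sum.cong[OF refl])
    fix i assume "i \<in> {..<M}"
    then have "q ^ i < q ^ M"
      using \<open>q > 1\<close> by (intro power_strict_increasing) auto
    then have "0 < q ^ i" "q ^ i < CARD('a)"
      using \<open>q > 1\<close> qM by auto
    moreover have "q ^ i = 1 \<longleftrightarrow> i = 0"
      using \<open>q > 1\<close> by simp
    ultimately show "u ^ q ^ i * (\<Sum>c\<in>UNIV. c ^ (q ^ i + (CARD('a) - 2))) = (if i = 0 then - u else 0)"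
      by (simp add: sum_power_plus_CARD_minus_two)
  qed
  also have "\<dots> = - u"
    using \<open>M > 0\<close> by simp
  finally show ?thesis .
qed

subsection \<open>Dual bases\<close>

lemma is_basis_independent:
  assumes "is_basis q m B" and "\<forall>i<m. c i \<in> GFq q" and "(\<Sum>i<m. c i * B ! i) = 0" and "i < m"
  shows "c i = 0"
  using assms unfolding is_basis_def by blast

lemma is_basis_spanning:
  assumes "is_basis q m B"
  obtains c where "\<forall>i<m. c i \<in> GFq q" and "x = (\<Sum>i<m. c i * B ! i)"
  using assms unfolding is_basis_def by blast

context
  fixes q k m :: nat
  assumes q: "q = CHAR('a::{field,finite}) ^ k" and k: "k \<ge> 1" and qm: "q ^ m = CARD('a)"
begin

lemma Tr_nondegenerate:
  assumes "\<And>z. Tr q m (d * z :: 'a) = 0"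
  shows "d = 0"
  using sum_Tr_mult_power_CARD_minus_two[OF q k qm, of d] assms by simp

lemma is_basis_Tr_nondegenerate:
  assumes B: "is_basis q m B" and d: "\<And>i. i < m \<Longrightarrow> Tr q m (B ! i * d :: 'a) = 0"
  shows "d = 0"
proof (rule Tr_nondegenerate)
  fix z :: 'a
  obtain c where c: "\<forall>i<m. c i \<in> GFq q" "z = (\<Sum>i<m. c i * B ! i)"
    using is_basis_spanning[OF B] .
  have "Tr q m (d * z) = (\<Sum>i<m. c i * Tr q m (B ! i * d))"
    unfolding c(2) using c(1)
    by (simp add: sum_distrib_left Tr_sum[OF q] Tr_mult_GFq[OF q, symmetric] mult_ac)
  also have "\<dots> = 0"
    using d by simp
  finally show "Tr q m (d * z) = 0" .
qed

lemma is_dual_basis_unique: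
  fixes B :: "'a list"
  assumes B: "is_basis q m B" and "is_dual_basis q m B \<beta>" and "is_dual_basis q m B \<beta>'"
  shows "\<beta> = \<beta>'"
proof (rule nth_equalityI)
  show "length \<beta> = length \<beta>'"
    using assms unfolding is_dual_basis_def is_basis_def by simp
  fix j assume "j < length \<beta>"
  then have "j < m"
    using assms unfolding is_dual_basis_def is_basis_def by simp
  have "\<beta> ! j - \<beta>' ! j = 0"
    by (rule is_basis_Tr_nondegenerate[OF B])
      (use assms \<open>j < m\<close> in \<open>simp add: is_dual_basis_def right_diff_distrib Tr_diff[OF q]\<close>)
  then show "\<beta> ! j = \<beta>' ! j"
    by simp
qed

lemma Tr_mult_sum_dual:
  assumes dual: "\<forall>i<m. \<forall>j<m. Tr q m (B ! i * \<beta> ! j :: 'a) = (if i = j then 1 else 0)"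
    and c: "\<forall>j<m. c j \<in> GFq q" and "i < m"
  shows "Tr q m (B ! i * (\<Sum>j<m. c j * \<beta> ! j)) = c i"
proof -
  have "Tr q m (B ! i * (\<Sum>j<m. c j * \<beta> ! j)) = (\<Sum>j<m. c j * Tr q m (B ! i * \<beta> ! j))"
    using c by (simp add: sum_distrib_left Tr_sum[OF q] Tr_mult_GFq[OF q, symmetric] mult_ac)
  also have "\<dots> = (\<Sum>j<m. if j = i then c i else 0)"
    by (rule sum.cong) (use dual \<open>i < m\<close> in auto)
  also have "\<dots> = c i"
    using \<open>i < m\<close> by simp
  finally show ?thesis .
qed

lemma is_basis_of_dual:
  assumes B: "is_basis q m B" and "length \<beta> = m"
    and dual: "\<forall>i<m. \<forall>j<m. Tr q m (B ! i * \<beta> ! j :: 'a) = (if i = j then 1 else 0)"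
  shows "is_basis q m \<beta>"
  unfolding is_basis_def
proof (intro conjI allI impI)
  show "length \<beta> = m"
    by fact
  fix c i assume c: "(\<forall>i<m. c i \<in> GFq q) \<and> (\<Sum>j<m. c j * \<beta> ! j) = 0" and "i < m"
  then show "c i = 0"
    using Tr_mult_sum_dual[OF dual, of c i] by (simp add: Tr_zero[OF q])
next
  fix x :: 'a
  let ?c = "\<lambda>j. Tr q m (B ! j * x)"
  have "x - (\<Sum>j<m. ?c j * \<beta> ! j) = 0"
  proof (rule is_basis_Tr_nondegenerate[OF B])
    fix i assume "i < m"
    then show "Tr q m (B ! i * (x - (\<Sum>j<m. ?c j * \<beta> ! j))) = 0"
      using Tr_mult_sum_dual[OF dual, of ?c i] Tr_in_GFq[OF q qm]
      by (simp add: right_diff_distrib Tr_diff[OF q])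
  qed
  then show "\<exists>c. (\<forall>i<m. c i \<in> GFq q) \<and> x = (\<Sum>i<m. c i * \<beta> ! i)"
    using Tr_in_GFq[OF q qm] by (intro exI[of _ ?c]) simp
qed

lemma card_GFq_coordinates:
  fixes B :: "'a list"
  assumes B: "is_basis q m B"
  shows "card (PiE {..<m} (\<lambda>_. GFq q :: 'a set)) = CARD('a)"
proof -
  let ?P = "PiE {..<m} (\<lambda>_. GFq q :: 'a set)"
  have "bij_betw (\<lambda>c. \<Sum>i<m. c i * B ! i) ?P UNIV"
  proof (rule bij_betwI')
    fix c c' assume c: "c \<in> ?P" and c': "c' \<in> ?P"
    show "(\<Sum>i<m. c i * B ! i) = (\<Sum>i<m. c' i * B ! i) \<longleftrightarrow> c = c'"
    proof
      assume "(\<Sum>i<m. c i * B ! i) = (\<Sum>i<m. c' i * B ! i)"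
      then have "(\<Sum>i<m. (c i - c' i) * B ! i) = 0"
        by (simp add: left_diff_distrib sum_subtractf)
      moreover have "\<forall>i<m. c i - c' i \<in> GFq q"
        using c c' by (auto intro: GFq_diff[OF q])
      ultimately have "\<forall>i<m. c i - c' i = 0"
        using is_basis_independent[OF B, of "\<lambda>i. c i - c' i"] by blast
      with c c' show "c = c'"
        by (intro PiE_ext) auto
    qed simp
  next
    fix x :: 'a
    obtain c where "\<forall>i<m. c i \<in> GFq q" and "x = (\<Sum>i<m. c i * B ! i)"
      using is_basis_spanning[OF B] .
    then show "\<exists>c\<in>?P. x = (\<Sum>i<m. c i * B ! i)"
      by (intro bexI[of _ "restrict c {..<m}"]) auto
  qed simp
  then show ?thesis
    by (simp add: bij_betw_same_card)
qed

lemma Tr_coordinates_surjective: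
  fixes B :: "'a list"
  assumes B: "is_basis q m B" and w: "\<forall>i<m. w i \<in> GFq q"
  obtains z where "\<forall>i<m. Tr q m (B ! i * z) = w i"
proof -
  let ?P = "PiE {..<m} (\<lambda>_. GFq q :: 'a set)"
  define coords where "coords z = restrict (\<lambda>i. Tr q m (B ! i * z)) {..<m}" for z
  have "inj coords"
  proof (rule injI)
    fix z z' assume eq: "coords z = coords z'"
    have Tr_eq: "Tr q m (B ! i * z) = Tr q m (B ! i * z')" if "i < m" for i
      using fun_cong[OF eq, of i] that unfolding coords_def by simp
    have "z - z' = 0"
      by (rule is_basis_Tr_nondegenerate[OF B])
        (simp add: Tr_eq right_diff_distrib Tr_diff[OF q])
    then show "z = z'"
      by simp
  qed
  moreover have "range coords \<subseteq> ?P"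
    unfolding coords_def using Tr_in_GFq[OF q qm] by (simp add: restrict_PiE_iff image_subset_iff)
  ultimately have "range coords = ?P"
    using card_GFq_coordinates[OF B] by (intro card_subset_eq) (auto simp: card_image finite_PiE)
  moreover have "restrict w {..<m} \<in> ?P"
    using w by auto
  ultimately have "restrict w {..<m} \<in> range coords"
    by simp
  then obtain z where z: "coords z = restrict w {..<m}"
    by (metis rangeE)
  have "Tr q m (B ! i * z) = w i" if "i < m" for i
    using fun_cong[OF z, of i] that unfolding coords_def by simp
  then show thesis
    using that by blast
qed

lemma dual_basis_exists:
  fixes B :: "'a list"
  assumes B: "is_basis q m B"
  shows "\<exists>\<beta>. is_dual_basis q m B \<beta>"
proof -
  have "q > 0"
    using q prime_gt_0_nat[OF prime_CHAR_finite_field[where 'a='a]] by simp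
  have "\<exists>z. \<forall>i<m. Tr q m (B ! i * z) = (if i = j then 1 else 0)" for j
  proof -
    have "\<forall>i<m. (if i = j then 1 else 0) \<in> (GFq q :: 'a set)"
      using \<open>q > 0\<close> by simp
    then obtain z where "\<forall>i<m. Tr q m (B ! i * z) = (if i = j then 1 else 0)"
      by (rule Tr_coordinates_surjective[OF B])
    then show ?thesis ..
  qed
  then obtain z where z: "\<forall>i<m. Tr q m (B ! i * z j) = (if i = j then 1 else 0)" for j
    by metis
  define \<beta> where "\<beta> = map z [0..<m]"
  have dual: "\<forall>i<m. \<forall>j<m. Tr q m (B ! i * \<beta> ! j) = (if i = j then 1 else 0)"
    by (simp add: \<beta>_def z)
  then have "is_dual_basis q m B \<beta>"
    unfolding is_dual_basis_def using is_basis_of_dual[OF B _ dual] by (simp add: \<beta>_def)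
  then show ?thesis ..
qed

lemma dual_basis_eqI:
  fixes B :: "'a list"
  assumes "is_basis q m B" and "is_dual_basis q m B \<beta>"
  shows "dual_basis q m B = \<beta>"
  unfolding dual_basis_def
  by (rule the_equality) (use assms is_dual_basis_unique in blast)+

lemma is_dual_basis_dual_basis:
  fixes B :: "'a list"
  assumes "is_basis q m B"
  shows "is_dual_basis q m B (dual_basis q m B)"
  using dual_basis_exists[OF assms] dual_basis_eqI[OF assms] by metis

end

subsection \<open>Biadditive maps as linearized forms\<close>

lemma additive_mult_of_nat:
  fixes \<phi> :: "'a::comm_ring_1 \<Rightarrow> 'a"
  assumes "additive \<phi>"
  shows "\<phi> (of_nat n * x) = of_nat n * \<phi> x"
  by (induction n) (simp_all add: distrib_right additive.add[OF assms] additive.zero[OF assms])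

lemma of_nat_power_CHAR: "(of_nat n :: 'a::{field,finite}) ^ CHAR('a) = of_nat n"
proof (induction n)
  case 0
  then show ?case
    using prime_gt_0_nat[OF prime_CHAR_finite_field[where 'a='a]] by simp
next
  case (Suc n)
  then show ?case
    using frobenius_add[of "CHAR('a)" 1 "of_nat n :: 'a" 1] by (simp add: add.commute)
qed

lemma power_CHAR_eq_self_imp_of_nat:
  assumes "(x::'a::{field,finite}) ^ CHAR('a) = x"
  shows "x \<in> range of_nat"
proof -
  let ?p = "CHAR('a)"
  let ?R = "of_nat ` {..<?p} :: 'a set"
  have "card ?R = ?p"
    by (subst card_image) (auto simp: inj_on_def of_nat_eq_iff_cong_CHAR cong_def)
  define P :: "'a poly" where "P = monom 1 ?p - monom 1 1"
  have "?p \<ge> 2"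
    using prime_ge_2_nat[OF prime_CHAR_finite_field[where 'a='a]] .
  have "degree (monom (1::'a) 1) \<le> ?p"
    using \<open>?p \<ge> 2\<close> degree_monom_le[of "1::'a" 1] by linarith
  then have "degree P \<le> ?p"
    unfolding P_def by (rule degree_diff_le[OF degree_monom_le])
  moreover have "P \<noteq> 0"
  proof -
    have "coeff P ?p = 1"
      using \<open>?p \<ge> 2\<close> by (simp add: P_def)
    then show ?thesis
      by auto
  qed
  ultimately have "card {x. poly P x = 0} \<le> card ?R"
    using card_poly_roots_bound[of P] \<open>card ?R = ?p\<close> by simp
  moreover have "?R \<subseteq> {x. poly P x = 0}"
    by (auto simp: P_def poly_monom of_nat_power_CHAR)
  ultimately have "?R = {x. poly P x = 0}"
    by (intro card_seteq) auto
  moreover have "poly P x = 0"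
    using assms by (simp add: P_def poly_monom)
  ultimately show ?thesis
    by auto
qed

context
  fixes N :: nat
  assumes N: "CHAR('a::{field,finite}) ^ N = CARD('a)"
begin

lemma additive_mult_Tr:
  fixes \<phi> :: "'a \<Rightarrow> 'a"
  assumes "additive \<phi>"
  shows "\<phi> (Tr CHAR('a) N w * x) = Tr CHAR('a) N w * \<phi> x"
proof -
  have "Tr CHAR('a) N w \<in> GFq CHAR('a)"
    by (rule Tr_in_GFq[of _ 1]) (simp_all add: N)
  then obtain n where "Tr CHAR('a) N w = of_nat n"
    using power_CHAR_eq_self_imp_of_nat unfolding GFq_def by blast
  then show ?thesis
    by (simp add: additive_mult_of_nat[OF assms])
qed

lemma additive_eq_linearized:
  fixes \<phi> :: "'a \<Rightarrow> 'a"
  assumes "additive \<phi>"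
  shows "\<phi> u = (\<Sum>i<N. - (\<Sum>c\<in>UNIV. c ^ CHAR('a) ^ i * \<phi> (c ^ (CARD('a) - 2))) * u ^ CHAR('a) ^ i)"
proof -
  have "\<phi> u = \<phi> (- (\<Sum>c\<in>UNIV. Tr CHAR('a) N (u * c) * c ^ (CARD('a) - 2)))"
    using sum_Tr_mult_power_CARD_minus_two[of _ 1 N u] N by simp
  also have "\<dots> = - (\<Sum>c\<in>UNIV. Tr CHAR('a) N (u * c) * \<phi> (c ^ (CARD('a) - 2)))"
    by (simp add: additive.minus[OF assms] additive.sum[OF assms] additive_mult_Tr[OF assms])
  also have "\<dots> = (\<Sum>i<N. - (\<Sum>c\<in>UNIV. c ^ CHAR('a) ^ i * \<phi> (c ^ (CARD('a) - 2))) * u ^ CHAR('a) ^ i)"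
    unfolding Tr_def
    by (simp add: sum_distrib_left sum_distrib_right power_mult_distrib mult_ac sum_negf
        sum.swap[where A = UNIV])
  finally show ?thesis .
qed

lemma biadditive_eq_bilinearized:
  fixes G :: "'a \<Rightarrow> 'a \<Rightarrow> 'a"
  assumes left: "\<And>v. additive (\<lambda>u. G u v)" and right: "\<And>u. additive (G u)"
  obtains g where "\<And>u v. G u v = (\<Sum>i<N. \<Sum>j<N. g i j * u ^ CHAR('a) ^ i * v ^ CHAR('a) ^ j)"
proof -
  define a where "a i v = - (\<Sum>c\<in>UNIV. c ^ CHAR('a) ^ i * G (c ^ (CARD('a) - 2)) v)" for i v
  have "additive (a i)" for i
    by unfold_locales
      (simp add: a_def additive.add[OF right] distrib_left sum.distrib)
  define g where "g i j = - (\<Sum>d\<in>UNIV. d ^ CHAR('a) ^ j * a i (d ^ (CARD('a) - 2)))" for i j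
  have "G u v = (\<Sum>i<N. \<Sum>j<N. g i j * u ^ CHAR('a) ^ i * v ^ CHAR('a) ^ j)" for u v
  proof -
    have "G u v = (\<Sum>i<N. a i v * u ^ CHAR('a) ^ i)"
      unfolding a_def by (rule additive_eq_linearized[OF left])
    also have "\<dots> = (\<Sum>i<N. (\<Sum>j<N. g i j * v ^ CHAR('a) ^ j) * u ^ CHAR('a) ^ i)"
      unfolding g_def by (subst additive_eq_linearized[OF \<open>additive (a _)\<close>]) (rule refl)
    finally show ?thesis
      by (simp add: sum_distrib_left sum_distrib_right mult_ac)
  qed
  then show thesis
    by (rule that)
qed

lemma linearized_eq_zero_imp_coeff_eq_zero:
  assumes zero: "\<And>u::'a. (\<Sum>i<N. a i * u ^ CHAR('a) ^ i) = 0" and "j < N"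
  shows "a j = 0"
proof -
  have p: "CHAR('a) > 1"
    using prime_gt_1_nat[OF prime_CHAR_finite_field[where 'a='a]] .
  define P :: "'a poly" where "P = (\<Sum>i<N. monom (a i) (CHAR('a) ^ i))"
  have "degree P \<le> CARD('a) - 1"
    unfolding P_def
  proof (rule degree_sum_le)
    fix i assume "i \<in> {..<N}"
    then have "CHAR('a) ^ i < CHAR('a) ^ N"
      using p by (intro power_strict_increasing) auto
    then show "degree (monom (a i) (CHAR('a) ^ i)) \<le> CARD('a) - 1"
      using N degree_monom_le[of "a i" "CHAR('a) ^ i"] by simp
  qed simp
  moreover have "{x. poly P x = 0} = UNIV"
    using zero by (simp add: P_def poly_sum poly_monom)
  ultimately have "P = 0"
    using card_poly_roots_bound[of P] CARD_ge_2_finite_field[where 'a='a] by fastforce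
  moreover have "coeff P (CHAR('a) ^ j) = a j"
    using \<open>j < N\<close> p by (simp add: P_def coeff_sum if_distrib cong: if_cong)
  ultimately show ?thesis
    by simp
qed

lemma bilinearized_eq_zero_imp_coeff_eq_zero:
  assumes zero: "\<And>u v::'a. (\<Sum>i<N. \<Sum>j<N. g i j * u ^ CHAR('a) ^ i * v ^ CHAR('a) ^ j) = 0"
    and "i < N" and "j < N"
  shows "g i j = 0"
proof -
  have "(\<Sum>j<N. g i j * v ^ CHAR('a) ^ j) = 0" for v :: 'a
  proof (rule linearized_eq_zero_imp_coeff_eq_zero[OF _ \<open>i < N\<close>])
    fix u :: 'a
    show "(\<Sum>i<N. (\<Sum>j<N. g i j * v ^ CHAR('a) ^ j) * u ^ CHAR('a) ^ i) = 0"
      using zero[of u v] by (simp add: sum_distrib_left sum_distrib_right mult_ac)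
  qed
  then show ?thesis
    by (rule linearized_eq_zero_imp_coeff_eq_zero[OF _ \<open>j < N\<close>])
qed

lemma bilinearized_coeff_scaling_invariant:
  fixes G :: "'a \<Rightarrow> 'a \<Rightarrow> 'a"
  assumes rep: "\<And>u v. G u v = (\<Sum>i<N. \<Sum>j<N. g i j * u ^ CHAR('a) ^ i * v ^ CHAR('a) ^ j)"
    and inv: "\<And>u v. G (c * u) (c * v) = G u v" and "i < N" and "j < N"
  shows "g i j * (c ^ (CHAR('a) ^ i + CHAR('a) ^ j) - 1) = 0"
proof (rule bilinearized_eq_zero_imp_coeff_eq_zero[where g = "\<lambda>i j. g i j * (c ^ (CHAR('a) ^ i + CHAR('a) ^ j) - 1)",
      OF _ \<open>i < N\<close> \<open>j < N\<close>])
  fix u v :: 'a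
  have "0 = G (c * u) (c * v) - G u v"
    by (simp add: inv)
  also have "\<dots> = (\<Sum>i<N. \<Sum>j<N. g i j * (c ^ (CHAR('a) ^ i + CHAR('a) ^ j) - 1)
                                    * u ^ CHAR('a) ^ i * v ^ CHAR('a) ^ j)"
    unfolding rep by (simp add: sum_subtractf[symmetric] power_add algebra_simps)
  finally show "(\<Sum>i<N. \<Sum>j<N. g i j * (c ^ (CHAR('a) ^ i + CHAR('a) ^ j) - 1)
                                * u ^ CHAR('a) ^ i * v ^ CHAR('a) ^ j) = 0"
    by simp
qed

lemma biadditive_scaling_invariant_eq_zero:
  fixes G :: "'a \<Rightarrow> 'a \<Rightarrow> 'a"
  assumes "\<And>v. additive (\<lambda>u. G u v)" and "\<And>u. additive (G u)"
    and q: "q = CHAR('a) ^ k"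
    and "\<alpha> \<in> GFq q" "\<gamma> \<in> GFq q" "\<alpha> \<noteq> 0" "\<gamma> \<noteq> 0" "\<alpha> \<noteq> \<gamma>" and "s \<notin> GFq q"
    and inv_\<alpha>: "\<And>u v. G ((1 + \<alpha> * s) * u) ((1 + \<alpha> * s) * v) = G u v"
    and inv_\<gamma>: "\<And>u v. G ((1 + \<gamma> * s) * u) ((1 + \<gamma> * s) * v) = G u v"
  shows "G u v = 0"
proof -
  obtain g where rep: "\<And>u v. G u v = (\<Sum>i<N. \<Sum>j<N. g i j * u ^ CHAR('a) ^ i * v ^ CHAR('a) ^ j)"
    using biadditive_eq_bilinearized[OF assms(1,2)] by blast
  have "g i j = 0" if "i < N" "j < N" for i j
    using bilinearized_coeff_scaling_invariant[OF rep inv_\<alpha> that]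
      bilinearized_coeff_scaling_invariant[OF rep inv_\<gamma> that]
      frobenius_sum_power_not_both_one[OF q assms(4-9), of i j]
    by auto
  then show ?thesis
    by (simp add: rep)
qed

end

subsection \<open>Trace codes\<close>

definition traced_form ::
    "nat \<Rightarrow> nat \<Rightarrow> ('a::field list \<Rightarrow> 'a list \<Rightarrow> 'b) \<Rightarrow> 'a list \<Rightarrow> 'a list \<Rightarrow> 'a \<Rightarrow> 'a \<Rightarrow> 'b" where
  "traced_form q m f x y u v = f (map (\<lambda>xi. Tr q m (u * xi)) x) (map (\<lambda>yi. Tr q m (v * yi)) y)"

definition trace_blocks :: "nat \<Rightarrow> nat \<Rightarrow> 'a::field list \<Rightarrow> 'a list \<Rightarrow> 'a list" where
  "trace_blocks q m L x = concat (map (\<lambda>b. map (\<lambda>xi. Tr q m (b * xi)) x) L)"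

lemma Im_eq_image_trace_blocks: "Im q m B C = trace_blocks q m (dual_basis q m B) ` C"
  unfolding Defs.Im_def trace_blocks_def ..

lemma take_drop_concat_map:
  assumes "\<And>b. length (h b) = n" and "i < length L"
  shows "take n (drop (i * n) (concat (map h L))) = h (L ! i)"
  using assms(2)
proof (induction L arbitrary: i)
  case (Cons b L)
  then show ?case
    using assms(1)[of b] by (cases i) (simp_all add: add.commute)
qed simp

lemma induced_form_trace_blocks:
  assumes "length L = m" and "length x = n" and "length y = n"
  shows "induced_form m n f (trace_blocks q m L x) (trace_blocks q m L y)
       = (\<Sum>i<m. traced_form q m f x y (L ! i) (L ! i))"
  unfolding induced_form_def trace_blocks_def traced_form_def
  using assms by (intro sum.cong refl) (simp add: take_drop_concat_map)

lemma traced_form_scale: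
  "traced_form q m f (map ((*) a) x) (map ((*) b) y) u v = traced_form q m f x y (u * a) (v * b)"
  unfolding traced_form_def by (simp add: comp_def mult.assoc)

lemma
  fixes f :: "'a::{field,finite} list \<Rightarrow> 'a list \<Rightarrow> 'a"
  assumes q: "q = CHAR('a) ^ k" and f: "biadditive n f" and "length x = n" and "length y = n"
  shows additive_traced_form_left: "additive (\<lambda>u. traced_form q m f x y u v)"
    and additive_traced_form_right: "additive (traced_form q m f x y u)"
proof -
  have Tr_add: "Tr q m (s + t) = Tr q m s + Tr q m t" for s t :: 'a
    using additive.add[OF additive_Tr[OF q]] .
  have vadd_Tr: "map (\<lambda>xi. Tr q m ((u1 + u2) * xi)) z
      = vadd (map (\<lambda>xi. Tr q m (u1 * xi)) z) (map (\<lambda>xi. Tr q m (u2 * xi)) z)"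
    for u1 u2 and z :: "'a list"
    unfolding vadd_def by (induction z) (simp_all add: distrib_right Tr_add)
  show "additive (\<lambda>u. traced_form q m f x y u v)"
    by unfold_locales
      (use f assms(3,4) in \<open>simp add: traced_form_def vadd_Tr biadditive_def vecs_def\<close>)
  show "additive (traced_form q m f x y u)"
    by unfold_locales
      (use f assms(3,4) in \<open>simp add: traced_form_def vadd_Tr biadditive_def vecs_def\<close>)
qed

lemma sum_traced_form_eq_zero:
  assumes "scalable C" and "C \<subseteq> vecs UNIV n"
    and orth: "self_orthogonal (Im q m B C) (induced_form m n f)"
    and "length (dual_basis q m B) = m" and "x \<in> C" and "y \<in> C"
  shows "(\<Sum>i<m. traced_form q m f x y (dual_basis q m B ! i * a) (dual_basis q m B ! i * b)) = 0"
proof -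
  let ?L = "dual_basis q m B"
  have "map ((*) a) x \<in> C" and "map ((*) b) y \<in> C"
    using assms(1,5,6) unfolding scalable_def by blast+
  moreover have "length (map ((*) a) x) = n" and "length (map ((*) b) y) = n"
    using assms(2,5,6) unfolding vecs_def by auto
  moreover have "induced_form m n f (trace_blocks q m ?L (map ((*) a) x)) (trace_blocks q m ?L (map ((*) b) y)) = 0"
    using orth \<open>map ((*) a) x \<in> C\<close> \<open>map ((*) b) y \<in> C\<close>
    unfolding self_orthogonal_def Im_eq_image_trace_blocks by blast
  ultimately show ?thesis
    using assms(4) by (simp add: induced_form_trace_blocks traced_form_scale)
qed

lemma scaling_invariant_of_vanishing_sums:
  fixes G :: "'a::field \<Rightarrow> 'a \<Rightarrow> 'b::ab_group_add"
  assumes "length \<beta> = m" and "0 < m" and "\<beta> ! 0 \<noteq> 0"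
    and sum: "\<And>a b. (\<Sum>i<m. G (\<beta> ! i * a) (\<beta> ! i * b)) = 0"
    and sum': "\<And>a b. (\<Sum>i<m. G (\<beta>[0 := \<beta> ! 0 + c * \<beta> ! 1] ! i * a) (\<beta>[0 := \<beta> ! 0 + c * \<beta> ! 1] ! i * b)) = 0"
  shows "G ((1 + c * (\<beta> ! 1 / \<beta> ! 0)) * u) ((1 + c * (\<beta> ! 1 / \<beta> ! 0)) * v) = G u v"
proof -
  obtain m' where m: "m = Suc m'"
    using \<open>0 < m\<close> by (cases m) auto
  let ?w = "\<beta> ! 0 + c * \<beta> ! 1"
  have "G (?w * a) (?w * b) - G (\<beta> ! 0 * a) (\<beta> ! 0 * b)
      = (\<Sum>i<m. G (\<beta>[0 := ?w] ! i * a) (\<beta>[0 := ?w] ! i * b)) - (\<Sum>i<m. G (\<beta> ! i * a) (\<beta> ! i * b))"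
    for a b
    using \<open>length \<beta> = m\<close> unfolding m sum.lessThan_Suc_shift by simp
  then have "G (?w * a) (?w * b) = G (\<beta> ! 0 * a) (\<beta> ! 0 * b)" for a b
    using sum sum' by simp
  from this[of "u / \<beta> ! 0" "v / \<beta> ! 0"] show ?thesis
    using \<open>\<beta> ! 0 \<noteq> 0\<close> by (simp add: field_simps)
qed

lemma is_basis_nth_nonzero:
  assumes "is_basis q m \<beta>" and "i < m" and "q > 0"
  shows "\<beta> ! i \<noteq> (0::'a::field)"
proof
  assume "\<beta> ! i = 0"
  have "(\<Sum>j<m. (if j = i then 1 else 0) * \<beta> ! j) = (\<Sum>j<m. if j = i then \<beta> ! i else 0)"
    by (rule sum.cong) auto
  also have "\<dots> = 0"
    using \<open>\<beta> ! i = 0\<close> by simp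
  finally have "(\<Sum>j<m. (if j = i then 1 else 0) * \<beta> ! j) = 0" .
  moreover have "\<forall>j<m. (if j = i then 1 else 0) \<in> (GFq q :: 'a set)"
    using \<open>q > 0\<close> by simp
  ultimately show False
    using is_basis_independent[OF assms(1), of "\<lambda>j. if j = i then 1 else 0" i] \<open>i < m\<close> by simp
qed

lemma is_basis_ratio_notin_GFq:
  assumes "is_basis q m \<beta>" and "2 \<le> m" and q: "q = CHAR('a::{field,finite}) ^ k"
  shows "\<beta> ! 1 / \<beta> ! 0 \<notin> (GFq q :: 'a set)"
proof
  assume s: "\<beta> ! 1 / \<beta> ! 0 \<in> GFq q"
  have "q > 0"
    using q prime_gt_0_nat[OF prime_CHAR_finite_field[where 'a='a]] by simp
  have "\<beta> ! 0 \<noteq> 0"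
    using is_basis_nth_nonzero[OF assms(1) _ \<open>q > 0\<close>] assms(2) by simp
  obtain m' where m: "m = Suc (Suc m')"
    using assms(2) by (metis add_2_eq_Suc le_Suc_ex)
  define c :: "nat \<Rightarrow> 'a" where "c j = (if j = 0 then \<beta> ! 1 / \<beta> ! 0 else if j = 1 then -1 else 0)" for j
  have "(\<Sum>j<m. c j * \<beta> ! j) = 0"
    unfolding m sum.lessThan_Suc_shift c_def using \<open>\<beta> ! 0 \<noteq> 0\<close> by simp
  moreover have "\<forall>j<m. c j \<in> GFq q"
    unfolding c_def using s \<open>q > 0\<close> GFq_uminus[OF q GFq_one] by simp
  ultimately have "c 1 = 0"
    using is_basis_independent[OF assms(1), of c 1] m by simp
  then show False
    by (simp add: c_def)
qed

lemma traced_form_scaling_invariant: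
  fixes f :: "'a::{field,finite} list \<Rightarrow> 'a list \<Rightarrow> 'b::ab_group_add"
  assumes q: "q = CHAR('a) ^ k" and k: "k \<ge> 1" and qm: "q ^ m = CARD('a)"
    and C: "scalable C" "C \<subseteq> vecs UNIV n"
    and B: "is_basis q m B" "is_dual_basis q m B \<beta>" "self_orthogonal (Im q m B C) (induced_form m n f)"
    and B': "is_basis q m B'" "is_dual_basis q m B' (\<beta>[0 := \<beta> ! 0 + c * \<beta> ! 1])"
      "self_orthogonal (Im q m B' C) (induced_form m n f)"
    and "\<beta> ! 0 \<noteq> 0" and "x \<in> C" and "y \<in> C"
  shows "traced_form q m f x y ((1 + c * (\<beta> ! 1 / \<beta> ! 0)) * u) ((1 + c * (\<beta> ! 1 / \<beta> ! 0)) * v)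
       = traced_form q m f x y u v"
proof (rule scaling_invariant_of_vanishing_sums)
  have dual: "dual_basis q m B = \<beta>" "dual_basis q m B' = \<beta>[0 := \<beta> ! 0 + c * \<beta> ! 1]"
    using dual_basis_eqI[OF q k qm] B B' by blast+
  show "length \<beta> = m"
    using B(2) by (simp add: is_dual_basis_def is_basis_def)
  then show "(\<Sum>i<m. traced_form q m f x y (\<beta> ! i * a) (\<beta> ! i * b)) = 0" for a b
    using sum_traced_form_eq_zero[OF C B(3)] dual \<open>x \<in> C\<close> \<open>y \<in> C\<close> by simp
  show "(\<Sum>i<m. traced_form q m f x y (\<beta>[0 := \<beta> ! 0 + c * \<beta> ! 1] ! i * a)
                                     (\<beta>[0 := \<beta> ! 0 + c * \<beta> ! 1] ! i * b)) = 0" for a b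
    using sum_traced_form_eq_zero[OF C B'(3)] dual \<open>length \<beta> = m\<close> \<open>x \<in> C\<close> \<open>y \<in> C\<close> by simp
  show "0 < m"
    using qm CARD_ge_2_finite_field[where 'a='a] by (cases m) auto
qed fact

lemma self_orthogonal_TrC_of_traced_form_eq_zero:
  assumes "\<And>x y. x \<in> C \<Longrightarrow> y \<in> C \<Longrightarrow> traced_form q m f x y 1 1 = 0"
  shows "self_orthogonal (TrC q m C) f"
  using assms unfolding self_orthogonal_def TrC_def traced_form_def by auto

lemma self_orthogonal_Im_of_traced_form_eq_zero:
  fixes f :: "'a::{field,finite} list \<Rightarrow> 'a list \<Rightarrow> 'b::comm_monoid_add"
  assumes q: "q = CHAR('a) ^ k" and k: "k \<ge> 1" and qm: "q ^ m = CARD('a)"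
    and "C \<subseteq> vecs UNIV n" and "is_basis q m B"
    and zero: "\<And>x y u v. x \<in> C \<Longrightarrow> y \<in> C \<Longrightarrow> traced_form q m f x y u v = 0"
  shows "self_orthogonal (Im q m B C) (induced_form m n f)"
proof -
  have "length (dual_basis q m B) = m"
    using is_dual_basis_dual_basis[OF q k qm \<open>is_basis q m B\<close>]
    by (simp add: is_dual_basis_def is_basis_def)
  moreover have "length x = n" if "x \<in> C" for x
    using that \<open>C \<subseteq> vecs UNIV n\<close> by (auto simp: vecs_def)
  ultimately show ?thesis
    unfolding self_orthogonal_def Im_eq_image_trace_blocks
    by (auto simp: induced_form_trace_blocks zero)
qed

theorem theorem4:
  fixes q m n :: nat
    and C :: "'a::{field,finite} list set"
    and f :: "'a list \<Rightarrow> 'a list \<Rightarrow> 'a"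
    and B1 B2 B3 \<beta> :: "'a list"
    and \<alpha> \<gamma> :: 'a
  assumes "prime_power q" and "q > 2" and "m \<ge> 2" and "n \<ge> 1"
    and "card (UNIV :: 'a set) = q ^ m"
    and "C \<subseteq> vecs UNIV n" and "scalable C"
    and "biadditive n f"
    and "\<alpha> \<in> GFq q" and "\<gamma> \<in> GFq q" and "\<alpha> \<noteq> 0" and "\<gamma> \<noteq> 0" and "\<alpha> \<noteq> \<gamma>"
    and "is_basis q m B1" and "is_basis q m B2" and "is_basis q m B3"
    and "is_dual_basis q m B1 \<beta>"
    and "is_dual_basis q m B2 (\<beta>[0 := \<beta> ! 0 + \<alpha> * \<beta> ! 1])"
    and "is_dual_basis q m B3 (\<beta>[0 := \<beta> ! 0 + \<gamma> * \<beta> ! 1])"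
    and "self_orthogonal (Im q m B1 C) (induced_form m n f)"
    and "self_orthogonal (Im q m B2 C) (induced_form m n f)"
    and "self_orthogonal (Im q m B3 C) (induced_form m n f)"
  shows "self_orthogonal (TrC q m C) f \<and>
         (\<forall>B. is_basis q m B \<longrightarrow> self_orthogonal (Im q m B C) (induced_form m n f))"
proof -
  obtain k where k: "k \<ge> 1" and q: "q = CHAR('a) ^ k"
    using CHAR_power_of_prime_power[OF assms(1,5)] assms(3) by auto
  have qm: "q ^ m = CARD('a)" and N: "CHAR('a) ^ (k * m) = CARD('a)"
    using assms(5) q by (simp_all add: power_mult)
  have "is_basis q m \<beta>"
    using assms(17) by (simp add: is_dual_basis_def)
  then have s: "\<beta> ! 1 / \<beta> ! 0 \<notin> GFq q" and "\<beta> ! 0 \<noteq> 0"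
    using is_basis_ratio_notin_GFq[OF _ assms(3) q] is_basis_nth_nonzero[of q m \<beta> 0] assms(2,3)
    by auto
  have len: "length x = n" if "x \<in> C" for x
    using that assms(6) by (auto simp: vecs_def)
  have zero: "traced_form q m f x y u v = 0" if "x \<in> C" "y \<in> C" for x y u v
  proof (rule biadditive_scaling_invariant_eq_zero[where G = "traced_form q m f x y", OF N _ _ q assms(9-13) s])
    show "additive (\<lambda>u. traced_form q m f x y u v')" "additive (traced_form q m f x y u')" for u' v'
      using additive_traced_form_left[OF q assms(8)] additive_traced_form_right[OF q assms(8)] len that
      by blast+
  qed (fact traced_form_scaling_invariant[OF q k qm assms(7,6,14,17,20,15,18,21) \<open>\<beta> ! 0 \<noteq> 0\<close> that]
        traced_form_scaling_invariant[OF q k qm assms(7,6,14,17,20,16,19,22) \<open>\<beta> ! 0 \<noteq> 0\<close> that])+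
  show ?thesis
  proof (intro conjI allI impI)
    show "self_orthogonal (TrC q m C) f"
      by (rule self_orthogonal_TrC_of_traced_form_eq_zero) (rule zero)
    show "self_orthogonal (Im q m B C) (induced_form m n f)" if "is_basis q m B" for B
      by (rule self_orthogonal_Im_of_traced_form_eq_zero[OF q k qm assms(6) that]) (rule zero)
  qed
qed

end
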